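(* Let $k\ge 1$ and $n\ge 100k$ be integers, and let $G$ be an $n$-vertex bipartite graph with minimum degree $\delta(G)>\frac{2}{5}n$. Let $u,v$ be two distinct vertices of $G$. Then: (a) if $v$ and $u$ lie in the same part of the bipartition, then for each $h\in\{3,5,\dots,2k+1\}$ there is a path from $v$ to $u$ with exactly $h$ vertices; (b) if $v$ and $u$ lie in different parts, then for each $s\in\{4,6,\dots,2k+2\}$ there is a path from $v$ to $u$ with exactly $s$ vertices.
   Context: The order of a path is its number of vertices. *)

theory Defs
  imports Complex_Main
begin

definition simple_graph :: "'a set \<Rightarrow> ('a \<Rightarrow> 'a \<Rightarrow> bool) \<Rightarrow> bool" where
  "simple_graph V E \<longleftrightarrow> finite V \<and> (\<forall>x y. E x y \<longrightarrow> x \<in> V \<and> y \<in> V)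
     \<and> (\<forall>x y. E x y \<longrightarrow> E y x) \<and> (\<forall>x. \<not> E x x)"

definition bipartition :: "'a set \<Rightarrow> ('a \<Rightarrow> 'a \<Rightarrow> bool) \<Rightarrow> 'a set \<Rightarrow> 'a set \<Rightarrow> bool" where
  "bipartition V E A B \<longleftrightarrow> A \<union> B = V \<and> A \<inter> B = {}
     \<and> (\<forall>x y. E x y \<longrightarrow> (x \<in> A \<and> y \<in> B) \<or> (x \<in> B \<and> y \<in> A))"

definition degree :: "'a set \<Rightarrow> ('a \<Rightarrow> 'a \<Rightarrow> bool) \<Rightarrow> 'a \<Rightarrow> nat" where
  "degree V E x = card {y \<in> V. E x y}"

text \<open>A path given by its list of vertices; its order is the number of vertices.\<close>
definition is_path :: "'a set \<Rightarrow> ('a \<Rightarrow> 'a \<Rightarrow> bool) \<Rightarrow> 'a list \<Rightarrow> bool" where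
  "is_path V E p \<longleftrightarrow> p \<noteq> [] \<and> set p \<subseteq> V \<and> distinct p
     \<and> (\<forall>i. Suc i < length p \<longrightarrow> E (p ! i) (p ! Suc i))"

end

theory Submission
  imports Defs
begin

text \<open>Two vertices x, y in the same part have more than n/5 common neighbours: both
  neighbourhoods lie in the other part, which has fewer than 3n/5 vertices because
  any of its vertices has more than 2n/5 neighbours back in the first part. Hence a
  path of order 2m + 1 from x to y can be grown greedily two vertices at a time,
  walking away from x while avoiding the O(m) vertices used so far, and closed off
  through a fresh common neighbour. Prepending one edge gives the even orders.\<close>

lemma bipartition_commute: "bipartition V E A B \<Longrightarrow> bipartition V E B A"
  unfolding bipartition_def by blast

lemma bipartition_edge_between:
  assumes "bipartition V E A B" "E x y" "x \<in> A"
  shows "y \<in> B"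
  using assms unfolding bipartition_def by blast

lemma is_path_singleton: "x \<in> V \<Longrightarrow> is_path V E [x]"
  unfolding is_path_def by simp

lemma is_path_Cons:
  assumes "is_path V E p" "x \<in> V" "x \<notin> set p" "E x (hd p)"
  shows "is_path V E (x # p)"
  unfolding is_path_def
proof (intro conjI allI impI)
  show "set (x # p) \<subseteq> V" "distinct (x # p)"
    using assms(1-3) by (auto simp: is_path_def)
next
  fix i assume "Suc i < length (x # p)"
  then show "E ((x # p) ! i) ((x # p) ! Suc i)"
    using assms(1,4) by (cases i) (auto simp: is_path_def hd_conv_nth)
qed simp

lemma ex_neighbour_notin:
  assumes "finite F" "card F < degree V E x"
  shows "\<exists>y\<in>V. E x y \<and> y \<notin> F"
proof (rule ccontr)
  assume "\<not> ?thesis"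
  then have "{y \<in> V. E x y} \<subseteq> F" by blast
  then show False
    using assms card_mono[of F "{y \<in> V. E x y}"] by (simp add: degree_def)
qed

lemma card_common_neighbours_gt:
  fixes d :: real
  assumes "simple_graph V E" and bp: "bipartition V E A B"
    and min_degree: "\<forall>x\<in>V. d < real (degree V E x)" and "0 \<le> d"
    and "x \<in> A" "y \<in> A"
  shows "3 * d - real (card V) < real (card {z \<in> V. E x z \<and> E y z})"
proof -
  define Nx Ny where "Nx = {z \<in> V. E x z}" and "Ny = {z \<in> V. E y z}"
  have "finite V" "A \<union> B = V" "A \<inter> B = {}"
    using assms(1) bp by (auto simp: simple_graph_def bipartition_def)
  then have fin: "finite A" "finite B" and card_V: "card V = card A + card B"
    by (auto intro: finite_subset simp: card_Un_disjoint[symmetric])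
  have "x \<in> V" "y \<in> V" using \<open>A \<union> B = V\<close> assms(5,6) by auto
  then have deg_x: "d < real (card Nx)" and deg_y: "d < real (card Ny)"
    using min_degree by (auto simp: Nx_def Ny_def degree_def)
  have "Nx \<subseteq> B" "Ny \<subseteq> B"
    using bipartition_edge_between[OF bp] assms(5,6) by (auto simp: Nx_def Ny_def)
  then have card_union: "card (Nx \<union> Ny) \<le> card B"
    using fin by (simp add: card_mono)
  have "card (Nx \<union> Ny) + card (Nx \<inter> Ny) = card Nx + card Ny"
    using card_Un_Int[of Nx Ny] \<open>Nx \<subseteq> B\<close> \<open>Ny \<subseteq> B\<close> fin by (metis finite_subset)
  moreover have "Nx \<inter> Ny = {z \<in> V. E x z \<and> E y z}"
    by (auto simp: Nx_def Ny_def)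
  moreover obtain b where "b \<in> Nx"
    using deg_x \<open>0 \<le> d\<close> by fastforce
  then have "b \<in> B" "b \<in> V" using \<open>Nx \<subseteq> B\<close> by (auto simp: Nx_def)
  then have "d < real (card {a \<in> V. E b a})" and "{a \<in> V. E b a} \<subseteq> A"
    using min_degree bipartition_edge_between[OF bipartition_commute[OF bp]]
    by (auto simp: degree_def)
  then have "d < real (card A)"
    using fin card_mono[of A "{a \<in> V. E b a}"] by linarith
  ultimately show ?thesis
    using deg_x deg_y card_union card_V by (simp del: of_nat_add add: of_nat_add[symmetric])
qed

lemma ex_odd_path_avoiding:
  assumes sg: "simple_graph V E" and bp: "bipartition V E A B"
    and min_degree: "\<forall>x\<in>V. 2 / 5 * real (card V) < real (degree V E x)"
    and "1 \<le> m" and "5 * (card F + 2 * m) \<le> card V" and "finite F"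
    and "x \<in> A" "y \<in> A" "x \<noteq> y" "x \<notin> F" "y \<notin> F"
  shows "\<exists>p. is_path V E p \<and> length p = 2 * m + 1 \<and> hd p = x \<and> last p = y
    \<and> set p \<inter> F = {}"
  using assms(4-)
proof (induction m arbitrary: x F rule: nat_induct_at_least)
  case base
  have "A \<subseteq> V" and sym: "\<And>a b. E a b \<Longrightarrow> E b a" and irrefl: "\<And>a. \<not> E a a"
    using sg bp by (auto simp: simple_graph_def bipartition_def)
  have "card V / 5 < card {z \<in> V. E x z \<and> E y z}"
    using card_common_neighbours_gt[OF sg bp min_degree _ base(3,4)] by simp
  moreover have "5 * card F + 10 \<le> card V" using base(1) by simp
  ultimately have "card F < card {z \<in> V. E x z \<and> E y z}" by linarith
  then obtain z where z: "z \<in> V" "E x z" "E z y" "z \<notin> F"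
    using card_mono[OF base(2), of "{z \<in> V. E x z \<and> E y z}"] sym by fastforce
  have "is_path V E [x, z, y]"
    using z irrefl base(3-5) \<open>A \<subseteq> V\<close>
    by (intro is_path_Cons is_path_singleton) auto
  with z base show ?case by (intro exI[of _ "[x, z, y]"]) auto
next
  case (Suc m)
  have "A \<subseteq> V" and irrefl: "\<And>a. \<not> E a a"
    using sg bp by (auto simp: simple_graph_def bipartition_def)
  have "x \<in> V" using Suc.prems(3) \<open>A \<subseteq> V\<close> by blast
  have "real (5 * (card F + 2)) < real (card V)"
    using Suc.prems(1) Suc.hyps(1) by (simp only: of_nat_less_iff) simp
  then have "real (card F + 2) < 2 / 5 * real (card V)"
    by simp
  then have room: "\<And>v. v \<in> V \<Longrightarrow> card F + 2 < degree V E v"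
    using min_degree by (metis less_trans of_nat_less_iff)
  have x_room: "card (insert y F) < degree V E x"
    using room[OF \<open>x \<in> V\<close>] Suc.prems(2) by (simp add: card_insert_if)
  obtain z where z: "z \<in> V" "E x z" "z \<noteq> y" "z \<notin> F"
    using ex_neighbour_notin[OF _ x_room] Suc.prems(2) by blast
  have z_room: "card (insert x (insert y F)) < degree V E z"
    using room[OF z(1)] Suc.prems(2) by (simp add: card_insert_if)
  obtain w where w: "w \<in> V" "E z w" "w \<notin> insert x (insert y F)"
    using ex_neighbour_notin[OF _ z_room] Suc.prems(2) by blast
  have "z \<in> B" using bipartition_edge_between[OF bp z(2) Suc.prems(3)] .
  then have "w \<in> A" by (rule bipartition_edge_between[OF bipartition_commute[OF bp] w(2)])
  define F' where "F' = insert x (insert z F)"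
  have "5 * (card F' + 2 * m) \<le> card V"
    using Suc.prems(1,2) by (simp add: F'_def card_insert_if)
  moreover have "finite F'" "w \<noteq> y" "w \<notin> F'" "y \<notin> F'"
    using Suc.prems(2,5,7) w z(2,3) irrefl by (auto simp: F'_def)
  ultimately obtain p where p: "is_path V E p" "length p = 2 * m + 1" "hd p = w" "last p = y"
    "set p \<inter> F' = {}"
    using Suc.IH[OF _ _ \<open>w \<in> A\<close> Suc.prems(4)] by blast
  have "is_path V E (x # z # p)"
    using p z w irrefl \<open>x \<in> V\<close> by (intro is_path_Cons) (auto simp: F'_def)
  with p z Suc.prems(6) show ?case
    by (intro exI[of _ "x # z # p"]) (auto simp: F'_def)
qed

lemma ex_even_path:
  assumes sg: "simple_graph V E" and bp: "bipartition V E A B"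
    and min_degree: "\<forall>x\<in>V. 2 / 5 * real (card V) < real (degree V E x)"
    and "1 \<le> m" and "5 * (1 + 2 * m) \<le> card V"
    and "x \<in> B" "y \<in> A"
  shows "\<exists>p. is_path V E p \<and> length p = 2 * m + 2 \<and> hd p = x \<and> last p = y"
proof -
  have "x \<in> V" "x \<noteq> y" and irrefl: "\<And>a. \<not> E a a"
    using sg bp assms(6,7) by (auto simp: simple_graph_def bipartition_def)
  have "real (card {y}) < real (degree V E x)"
    using min_degree \<open>x \<in> V\<close> assms(4,5) by fastforce
  then have y_room: "card {y} < degree V E x"
    by (simp only: of_nat_less_iff)
  obtain w where w: "w \<in> V" "E x w" "w \<noteq> y"
    using ex_neighbour_notin[OF _ y_room] by auto
  have "w \<in> A" by (rule bipartition_edge_between[OF bipartition_commute[OF bp] w(2) assms(6)])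
  moreover have "5 * (card {x} + 2 * m) \<le> card V" "w \<notin> {x}" "y \<notin> {x}"
    using assms(5) \<open>x \<noteq> y\<close> w(2) irrefl by auto
  ultimately obtain p where p: "is_path V E p" "length p = 2 * m + 1" "hd p = w" "last p = y"
    "set p \<inter> {x} = {}"
    using ex_odd_path_avoiding[OF sg bp min_degree assms(4) _ _ _ assms(7) w(3)] by blast
  have "is_path V E (x # p)"
    using p w \<open>x \<in> V\<close> by (intro is_path_Cons) auto
  with p show ?thesis
    by (intro exI[of _ "x # p"]) auto
qed

theorem lemma3p1:
  fixes V :: "'a set" and E :: "'a \<Rightarrow> 'a \<Rightarrow> bool" and A B :: "'a set"
    and k n :: nat and u v :: 'a
  assumes "simple_graph V E"
    and "bipartition V E A B"
    and "card V = n"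
    and "k \<ge> 1" and "n \<ge> 100 * k"
    and "\<forall>x\<in>V. real (degree V E x) > 2 / 5 * real n"
    and "u \<in> V" and "v \<in> V" and "u \<noteq> v"
  shows "(((u \<in> A \<and> v \<in> A) \<or> (u \<in> B \<and> v \<in> B)) \<longrightarrow>
           (\<forall>h \<in> {3..2*k+1}. odd h \<longrightarrow>
              (\<exists>p. is_path V E p \<and> length p = h \<and> hd p = v \<and> last p = u))) \<and>
         (((u \<in> A \<and> v \<in> B) \<or> (u \<in> B \<and> v \<in> A)) \<longrightarrow>
           (\<forall>s \<in> {4..2*k+2}. even s \<longrightarrow>
              (\<exists>p. is_path V E p \<and> length p = s \<and> hd p = v \<and> last p = u)))"
proof -
  note sg = assms(1)
  have parts: "bipartition V E A B" "bipartition V E B A"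
    using assms(2) bipartition_commute by auto
  have min_degree: "\<forall>x\<in>V. 2 / 5 * real (card V) < real (degree V E x)"
    using assms(3,6) by simp
  have room: "5 * (1 + 2 * m) \<le> card V" if "m \<le> k" for m
    using that assms(3-5) by (simp add: algebra_simps)
  show ?thesis
  proof (intro conjI impI ballI)
    fix h assume same: "(u \<in> A \<and> v \<in> A) \<or> (u \<in> B \<and> v \<in> B)"
      and "h \<in> {3..2*k+1}" "odd h"
    then obtain m where h: "h = 2 * m + 1" "1 \<le> m" "m \<le> k"
      by (auto elim!: oddE)
    have odd_case: "\<exists>p. is_path V E p \<and> length p = h \<and> hd p = v \<and> last p = u"
      if "bipartition V E P Q" "v \<in> P" "u \<in> P" for P Q
      using ex_odd_path_avoiding[OF sg that(1) min_degree h(2) _ finite.emptyI that(2,3)]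
        room[OF h(3)] assms(9) h(1) by simp
    from same show "\<exists>p. is_path V E p \<and> length p = h \<and> hd p = v \<and> last p = u"
      using odd_case[OF parts(1)] odd_case[OF parts(2)] by blast
  next
    fix s assume different: "(u \<in> A \<and> v \<in> B) \<or> (u \<in> B \<and> v \<in> A)"
      and "s \<in> {4..2*k+2}" "even s"
    then obtain m where s: "s = 2 * m + 2" "1 \<le> m" "m \<le> k"
      by (intro that[of "s div 2 - 1"]) auto
    have even_case: "\<exists>p. is_path V E p \<and> length p = s \<and> hd p = v \<and> last p = u"
      if "bipartition V E P Q" "v \<in> Q" "u \<in> P" for P Q
      using ex_even_path[OF sg that(1) min_degree s(2) room[OF s(3)] that(2,3)] s(1) by simp
    from different show "\<exists>p. is_path V E p \<and> length p = s \<and> hd p = v \<and> last p = u"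
      using even_case[OF parts(1)] even_case[OF parts(2)] by blast
  qed
qed

end
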